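(* Let $A$ be a Banach lattice algebra. If $a,b\in BP_l(A)\cap BP_r(A)$, then $ab=ba$.
   Context: A Banach lattice algebra is a real Banach lattice $A$ with an associative bilinear product making it a Banach algebra such that $xy\ge0$ whenever $x,y\ge0$. $L_a(x)=ax$, $R_a(x)=xa$. A band projection on a Banach lattice $X$ is an operator $P$ with $P^2=P$, $0\le P\le I_X$. $BP_l(A)=\{a\in A_+: L_a\text{ is a band projection}\}$, $BP_r(A)=\{a\in A_+: R_a\text{ is a band projection}\}$. *)

theory Defs
  imports "HOL-Analysis.Analysis"
begin

definition labs :: "'a::{lattice, ab_group_add} \<Rightarrow> 'a" where
  "labs x = sup x (- x)"

definition banach_lattice_algebra ::
  "'a::{banach, real_normed_algebra, ordered_real_vector, lattice} itself \<Rightarrow> bool" where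
  "banach_lattice_algebra _ \<longleftrightarrow>
     (\<forall>x y::'a. labs x \<le> labs y \<longrightarrow> norm x \<le> norm y) \<and>
     (\<forall>x y::'a. 0 \<le> x \<longrightarrow> 0 \<le> y \<longrightarrow> 0 \<le> x * y)"

text \<open>Band projection on a Banach lattice: a (linear) operator P with P^2 = P and 0 \<le> P \<le> I,
the operator order meaning 0 \<le> P x \<le> x for all x \<ge> 0.\<close>
definition band_projection :: "('a::ordered_real_vector \<Rightarrow> 'a) \<Rightarrow> bool" where
  "band_projection P \<longleftrightarrow> linear P \<and> P \<circ> P = P \<and>
     (\<forall>x. 0 \<le> x \<longrightarrow> 0 \<le> P x \<and> P x \<le> x)"

definition BP_l :: "'a::{real_algebra, ordered_real_vector} set" where
  "BP_l = {a. 0 \<le> a \<and> band_projection (\<lambda>x. a * x)}"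

definition BP_r :: "'a::{real_algebra, ordered_real_vector} set" where
  "BP_r = {a. 0 \<le> a \<and> band_projection (\<lambda>x. x * a)}"

end

theory Submission
  imports Defs
begin

text \<open>Band projections P, Q on a Riesz space commute: for x \<ge> 0 split x = P x + (x - P x)
  into positive parts lying in the range and in the kernel of P. Since 0 \<le> Q y \<le> y,
  the operator Q keeps each part in the order interval below it, and P fixes everything
  below its range part and annihilates everything below its kernel part; hence
  P (Q x) = Q (P x). Applied to left and right multiplications by a and b this gives
  a b = a (a b) = (a b) a = b a.\<close>

lemma band_projection_linear: "band_projection P \<Longrightarrow> linear P"
  by (simp add: band_projection_def)

lemma band_projection_idem: "band_projection P \<Longrightarrow> P (P x) = P x"
  by (simp add: band_projection_def fun_eq_iff)

lemma band_projection_nonneg: "band_projection P \<Longrightarrow> 0 \<le> x \<Longrightarrow> 0 \<le> P x"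
  by (simp add: band_projection_def)

lemma band_projection_le: "band_projection P \<Longrightarrow> 0 \<le> x \<Longrightarrow> P x \<le> x"
  by (simp add: band_projection_def)

lemma band_projection_diff: "band_projection P \<Longrightarrow> P (x - y) = P x - P y"
  by (simp add: band_projection_linear linear_diff)

lemma band_projection_mono:
  assumes "band_projection P" and "x \<le> y"
  shows "P x \<le> P y"
  using band_projection_nonneg[OF assms(1), of "y - x"] assms
  by (simp add: band_projection_diff)

lemma band_projection_fixes_below:
  assumes P: "band_projection P" and "0 \<le> u" "u \<le> y" and "P y = y"
  shows "P u = u"
proof (rule antisym)
  show "P u \<le> u" using P \<open>0 \<le> u\<close> by (rule band_projection_le)
  have "P (y - u) \<le> y - u" using P \<open>u \<le> y\<close> by (simp add: band_projection_le)
  then show "u \<le> P u" using \<open>P y = y\<close> by (simp add: band_projection_diff[OF P])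
qed

lemma band_projection_kills_below:
  assumes P: "band_projection P" and "0 \<le> u" "u \<le> z" and "P z = 0"
  shows "P u = 0"
  using band_projection_mono[OF P \<open>u \<le> z\<close>] band_projection_nonneg[OF P \<open>0 \<le> u\<close>] \<open>P z = 0\<close>
  by simp

lemma band_projections_commute_nonneg:
  fixes P Q :: "'a::ordered_real_vector \<Rightarrow> 'a"
  assumes P: "band_projection P" and Q: "band_projection Q" and "0 \<le> x"
  shows "P (Q x) = Q (P x)"
proof -
  define y z where "y = P x" and "z = x - P x"
  have "0 \<le> y" "0 \<le> z" "P y = y" "P z = 0"
    using P \<open>0 \<le> x\<close> by (simp_all add: y_def z_def band_projection_nonneg band_projection_le
        band_projection_idem band_projection_diff)
  moreover have "0 \<le> Q y" "Q y \<le> y" "0 \<le> Q z" "Q z \<le> z"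
    using Q \<open>0 \<le> y\<close> \<open>0 \<le> z\<close> by (simp_all add: band_projection_nonneg band_projection_le)
  ultimately have "P (Q y) = Q y" "P (Q z) = 0"
    using band_projection_fixes_below[OF P] band_projection_kills_below[OF P] by blast+
  moreover have "Q x = Q y + Q z"
    using band_projection_linear[OF Q] by (simp add: y_def z_def linear_add[symmetric])
  ultimately show ?thesis
    using band_projection_linear[OF P] by (simp add: y_def linear_add)
qed

lemma band_projections_commute:
  fixes P Q :: "'a::{ordered_real_vector, lattice} \<Rightarrow> 'a"
  assumes P: "band_projection P" and Q: "band_projection Q"
  shows "P (Q x) = Q (P x)"
proof -
  define p where "p = sup x 0"
  have "0 \<le> p" "0 \<le> p - x" by (simp_all add: p_def)
  then have "P (Q p) = Q (P p)" "P (Q (p - x)) = Q (P (p - x))"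
    using band_projections_commute_nonneg[OF P Q] by blast+
  then have "P (Q (p - (p - x))) = Q (P (p - (p - x)))"
    by (simp add: band_projection_diff[OF P] band_projection_diff[OF Q])
  then show ?thesis by simp
qed

theorem mainTheorem17:
  fixes a b :: "'a::{banach, real_normed_algebra, ordered_real_vector, lattice}"
  assumes "banach_lattice_algebra TYPE('a)"
    and "a \<in> BP_l \<inter> BP_r" and "b \<in> BP_l \<inter> BP_r"
  shows "a * b = b * a"
proof -
  have La: "band_projection (\<lambda>x. a * x)" and Ra: "band_projection (\<lambda>x. x * a)"
   and Lb: "band_projection (\<lambda>x. b * x)" and Rb: "band_projection (\<lambda>x. x * b)"
    using assms(2,3) by (simp_all add: BP_l_def BP_r_def)
  have "a * b = a * (a * b)"
    using band_projection_idem[OF La] by simp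
  also have "\<dots> = (a * b) * a"
    using band_projections_commute[OF Ra Rb, of a] by (simp add: mult.assoc)
  also have "\<dots> = b * (a * a)"
    using band_projections_commute[OF La Lb, of a] by (simp add: mult.assoc)
  also have "\<dots> = b * a"
    using band_projection_idem[OF Ra, of b] by (simp add: mult.assoc)
  finally show ?thesis .
qed

end
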